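(* Let $\mathcal{G}=(\mathcal{V},\mathcal{E})$ be a connected time-invariant undirected graph on $\mathcal{V}=\{1,\dots,n\}$ with a fixed doubly stochastic weight matrix $\mathbf{W}=[w_{ij}]$ satisfying the standing weight conventions. Suppose each agent $i$ has initial state $\mu_i(0)\in\mathfrak{U}_2(\mathbb{R})$ and updates by $\mu_i(t+1)=\operatorname{argmin}_{\eta\in\mathfrak{U}_2(\mathbb{R})}\sum_{j\in\mathcal{N}_i}w_{ij}\ell_2(\eta,\mu_j(t))^2$. Then for every $i\in\mathcal{V}$, $\ell_2(\mu_i(t),\mu^\ast)\to0$ at an exponential rate, where $\mu^\ast=\operatorname{argmin}_{\eta\in\mathfrak{U}_2(\mathbb{R})}\frac1n\sum_{j\in\mathcal{V}}\ell_2(\eta,\mu_j(0))^2$.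
   Context: $\mathfrak{U}_2(\mathbb{R})$ is the set of Borel probability measures on $\mathbb{R}$ with finite second moment; $\ell_2$ is the 2-Wasserstein distance $\ell_2(\mu,\nu)=\big(\inf_{\gamma\in\Gamma(\mu,\nu)}\int|x-y|^2d\gamma\big)^{1/2}$ over couplings. $\mathcal{N}_i=\{j:(i,j)\in\mathcal{E}\}$ contains $i$; $w_{ij}>0$ iff $j\in\mathcal{N}_i$, $w_{ij}=0$ otherwise, $w_{ii}>0$; doubly stochastic means all row and column sums equal $1$. Exponential rate means there exist $C>0$, $\rho\in(0,1)$ with $\ell_2(\mu_i(t),\mu^\ast)\le C\rho^t$. *)

theory Defs
  imports "HOL-Probability.Probability"
begin

definition U2 :: "real measure set" where
  "U2 = {M. prob_space M \<and> sets M = sets borel \<and> integrable M (\<lambda>x. x ^ 2)}"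

definition couplings :: "real measure \<Rightarrow> real measure \<Rightarrow> (real \<times> real) measure set" where
  "couplings \<mu> \<nu> = {\<gamma>. sets \<gamma> = sets (borel \<Otimes>\<^sub>M borel) \<and>
       distr \<gamma> borel fst = \<mu> \<and> distr \<gamma> borel snd = \<nu>}"

definition W2 :: "real measure \<Rightarrow> real measure \<Rightarrow> real" where
  "W2 \<mu> \<nu> = sqrt (enn2real (INF \<gamma>\<in>couplings \<mu> \<nu>.
       \<integral>\<^sup>+ p. ennreal ((fst p - snd p) ^ 2) \<partial>\<gamma>))"

definition is_argmin_U2 :: "(real measure \<Rightarrow> real) \<Rightarrow> real measure \<Rightarrow> bool" where
  "is_argmin_U2 F \<eta> \<longleftrightarrow> \<eta> \<in> U2 \<and> (\<forall>\<xi>\<in>U2. F \<eta> \<le> F \<xi>)"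

end

theory Submission
  imports Defs
begin

(* On R every law in U2 is the push-forward of Lebesgue measure on (0,1) under its
   (monotone, square-integrable) quantile function, and W2 between two such laws is the
   L2 distance of their quantile functions, because the comonotone coupling is optimal.
   We prove the latter via a layer-cake formula expressing the quadratic cost of a coupling
   through its quadrant masses, which the comonotone coupling minimises simultaneously.
   Consequently a weighted W2 barycenter is the law of the weighted average of quantile
   functions, so in quantile coordinates the agents' update is the linear averaging
   x(t+1) = W x(t), applied pointwise in u in (0,1).  For a doubly stochastic W on a
   connected graph with self-loops, averaging preserves the mean and contracts the
   disagreement from the mean by a fixed factor (energy dissipation plus a discrete
   Poincare inequality).  Integrating over u bounds W2(mu_i(t), mu_star)^2 geometrically, where
   mu_star, the barycenter of the initial laws, has the averaged initial quantile function. *)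

lemma ramp_integral:
  fixes a b :: real
  assumes "a \<le> b"
  shows "(\<integral>\<^sup>+ s. indicator {a..b} s * ennreal (b - s) \<partial>lborel) = ennreal ((b - a)^2 / 2)"
proof -
  have deriv: "\<And>s. ((\<lambda>s. - ((b - s)^2) / 2) has_real_derivative (b - s)) (at s within {a..b})"
    by (auto intro!: derivative_eq_intros simp: power2_eq_square field_simps)
  have "((\<lambda>s. b - s) has_integral ((b - a)^2 / 2)) {a..b}"
    using fundamental_theorem_of_calculus[OF assms, of "\<lambda>s. - ((b - s)^2) / 2" "\<lambda>s. b - s"] deriv
    by (simp add: has_real_derivative_iff_has_vector_derivative)
  moreover have "(\<lambda>s. indicator {a..b} s * (b - s)) = (\<lambda>s. if s \<in> {a..b} then b - s else 0)"
    by (auto simp: indicator_def)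
  ultimately have "((\<lambda>s. indicator {a..b} s * (b - s)) has_integral ((b - a)^2 / 2)) UNIV"
    by (simp only: has_integral_restrict_UNIV)
  hence "(\<integral>\<^sup>+ s. indicator {a..b} s * (b - s) \<partial>lborel) = (b - a)^2 / 2"
    by (intro nn_integral_has_integral_lborel) (auto simp: indicator_def)
  moreover have "(\<integral>\<^sup>+ s. indicator {a..b} s * (b - s) \<partial>lborel) =
      (\<integral>\<^sup>+ s. indicator {a..b} s * ennreal (b - s) \<partial>lborel)"
    by (intro nn_integral_cong) (auto simp: indicator_def)
  ultimately show ?thesis by simp
qed

lemma ennreal_twice_half: "0 \<le> (a::real) \<Longrightarrow> 2 * ennreal (a / 2) = ennreal a"
  by (simp flip: ennreal_numeral ennreal_mult)

(* crossing x y s r = 1 iff the gap s < r lies between x and y; integrating it over all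
   gaps recovers half the squared distance (sq_dist_layer_cake). *)
definition crossing :: "real \<Rightarrow> real \<Rightarrow> real \<Rightarrow> real \<Rightarrow> ennreal" where
  "crossing x y s r = (if s < r \<and> x \<le> s \<and> r < y then 1 else 0) + (if s < r \<and> y \<le> s \<and> r < x then 1 else 0)"

lemma crossing_inner_integral:
  "(\<integral>\<^sup>+ r. (if s < r \<and> x \<le> s \<and> r < y then 1 else 0) \<partial>lborel) =
     (if x \<le> s \<and> s \<le> y then ennreal (y - s) else 0)"
proof (cases "x \<le> s")
  case True
  have "(\<integral>\<^sup>+ r. (if s < r \<and> x \<le> s \<and> r < y then 1 else 0) \<partial>lborel) =
        (\<integral>\<^sup>+ r. indicator {s<..<y} r \<partial>lborel)"
    using True by (intro nn_integral_cong) (auto simp: indicator_def)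
  thus ?thesis using True by auto
qed simp

lemma crossing_outer_integral:
  "(\<integral>\<^sup>+ s. (if x \<le> s \<and> s \<le> y then ennreal (y - s) else 0) \<partial>lborel) =
     (if x \<le> y then ennreal ((y - x)^2 / 2) else 0)"
proof (cases "x \<le> y")
  case True
  have "(\<integral>\<^sup>+ s. (if x \<le> s \<and> s \<le> y then ennreal (y - s) else 0) \<partial>lborel) =
        (\<integral>\<^sup>+ s. indicator {x..y} s * ennreal (y - s) \<partial>lborel)"
    by (intro nn_integral_cong) (auto simp: indicator_def)
  thus ?thesis using True ramp_integral[OF True] by simp
next
  case False
  hence "(\<lambda>s. if x \<le> s \<and> s \<le> y then ennreal (y - s) else 0) = (\<lambda>s. 0)" by auto
  thus ?thesis using False by simp
qed

lemma sq_dist_layer_cake: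
  "ennreal ((x - y)^2) = 2 * (\<integral>\<^sup>+ s. (\<integral>\<^sup>+ r. crossing x y s r \<partial>lborel) \<partial>lborel)"
proof -
  have "(\<integral>\<^sup>+ s. (\<integral>\<^sup>+ r. crossing x y s r \<partial>lborel) \<partial>lborel) =
     (\<integral>\<^sup>+ s. (if x \<le> s \<and> s \<le> y then ennreal (y - s) else 0)
             + (if y \<le> s \<and> s \<le> x then ennreal (x - s) else 0) \<partial>lborel)"
    unfolding crossing_def by (subst nn_integral_add) (auto simp: crossing_inner_integral)
  also have "\<dots> = (if x \<le> y then ennreal ((y - x)^2 / 2) else 0)
                 + (if y \<le> x then ennreal ((x - y)^2 / 2) else 0)"
    by (subst nn_integral_add) (auto simp: crossing_outer_integral)
  finally have layers: "(\<integral>\<^sup>+ s. (\<integral>\<^sup>+ r. crossing x y s r \<partial>lborel) \<partial>lborel) =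
      (if x \<le> y then ennreal ((y - x)^2 / 2) else 0) + (if y \<le> x then ennreal ((x - y)^2 / 2) else 0)" .
  show ?thesis
    unfolding layers by (cases "x = y") (auto simp: ennreal_twice_half power2_commute[of x y])
qed

lemma quadrants_measurable:
  "{p :: real \<times> real. fst p \<le> s \<and> r < snd p} \<in> sets (borel \<Otimes>\<^sub>M borel)"
  "{p :: real \<times> real. snd p \<le> s \<and> r < fst p} \<in> sets (borel \<Otimes>\<^sub>M borel)"
proof -
  have "{p. fst p \<le> s \<and> r < snd p} = {..s} \<times> {r<..}" "{p. snd p \<le> s \<and> r < fst p} = {r<..} \<times> {..s}"
    by auto
  thus "{p :: real \<times> real. fst p \<le> s \<and> r < snd p} \<in> sets (borel \<Otimes>\<^sub>M borel)"
    "{p :: real \<times> real. snd p \<le> s \<and> r < fst p} \<in> sets (borel \<Otimes>\<^sub>M borel)"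
    by (simp_all add: pair_measureI)
qed

lemma crossing_integral:
  fixes \<gamma> :: "(real \<times> real) measure"
  assumes S: "sets \<gamma> = sets (borel \<Otimes>\<^sub>M borel)"
  shows "(\<integral>\<^sup>+ p. crossing (fst p) (snd p) s r \<partial>\<gamma>) =
    (if s < r then emeasure \<gamma> {p. fst p \<le> s \<and> r < snd p} + emeasure \<gamma> {p. snd p \<le> s \<and> r < fst p} else 0)"
proof -
  have "(\<integral>\<^sup>+ p. crossing (fst p) (snd p) s r \<partial>\<gamma>) =
     (\<integral>\<^sup>+ p. indicator {p. s < r \<and> fst p \<le> s \<and> r < snd p} p
            + indicator {p. s < r \<and> snd p \<le> s \<and> r < fst p} p \<partial>\<gamma>)"
    by (intro nn_integral_cong) (auto simp: crossing_def indicator_def)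
  also have "\<dots> = (\<integral>\<^sup>+ p. indicator {p. s < r \<and> fst p \<le> s \<and> r < snd p} p \<partial>\<gamma>)
                 + (\<integral>\<^sup>+ p. indicator {p. s < r \<and> snd p \<le> s \<and> r < fst p} p \<partial>\<gamma>)"
    by (intro nn_integral_add) (auto simp: measurable_cong_sets[OF S refl])
  finally show ?thesis using quadrants_measurable[of s r] by (cases "s < r") (auto simp: S)
qed

lemma crossing_measurable:
  fixes \<gamma> :: "(real \<times> real) measure"
  assumes S: "sets \<gamma> = sets (borel \<Otimes>\<^sub>M borel)"
  shows "(\<lambda>(r, p). crossing (fst p) (snd p) s r) \<in> borel_measurable (lborel \<Otimes>\<^sub>M \<gamma>)"
    and "(\<lambda>(s, p). \<integral>\<^sup>+ r. crossing (fst p) (snd p) s r \<partial>lborel) \<in> borel_measurable (lborel \<Otimes>\<^sub>M \<gamma>)"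
    and "(\<lambda>p. \<integral>\<^sup>+ s. (\<integral>\<^sup>+ r. crossing (fst p) (snd p) s r \<partial>lborel) \<partial>lborel) \<in> borel_measurable \<gamma>"
proof -
  have sets_cong: "sets (M \<Otimes>\<^sub>M \<gamma>) = sets (M \<Otimes>\<^sub>M (borel \<Otimes>\<^sub>M borel))"
    "sets ((M \<Otimes>\<^sub>M \<gamma>) \<Otimes>\<^sub>M M') = sets ((M \<Otimes>\<^sub>M (borel \<Otimes>\<^sub>M borel)) \<Otimes>\<^sub>M M')"
    "sets ((\<gamma> \<Otimes>\<^sub>M M) \<Otimes>\<^sub>M M') = sets (((borel \<Otimes>\<^sub>M borel) \<Otimes>\<^sub>M M) \<Otimes>\<^sub>M M')"
    for M M' :: "real measure"
    by (intro sets_pair_measure_cong; simp add: S)+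
  show "(\<lambda>(r, p). crossing (fst p) (snd p) s r) \<in> borel_measurable (lborel \<Otimes>\<^sub>M \<gamma>)"
    unfolding measurable_cong_sets[OF sets_cong(1) refl] crossing_def by measurable
  have "(\<lambda>x. crossing (fst (snd (fst x))) (snd (snd (fst x))) (fst (fst x)) (snd x))
      \<in> borel_measurable ((lborel \<Otimes>\<^sub>M \<gamma>) \<Otimes>\<^sub>M lborel)"
    unfolding measurable_cong_sets[OF sets_cong(2) refl] crossing_def by measurable
  thus "(\<lambda>(s, p). \<integral>\<^sup>+ r. crossing (fst p) (snd p) s r \<partial>lborel) \<in> borel_measurable (lborel \<Otimes>\<^sub>M \<gamma>)"
    using lborel.borel_measurable_nn_integral[of "\<lambda>sp r. crossing (fst (snd sp)) (snd (snd sp)) (fst sp) r"]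
    by (simp add: split_beta')
  have "(\<lambda>x. crossing (fst (fst (fst x))) (snd (fst (fst x))) (snd (fst x)) (snd x))
      \<in> borel_measurable ((\<gamma> \<Otimes>\<^sub>M lborel) \<Otimes>\<^sub>M lborel)"
    unfolding measurable_cong_sets[OF sets_cong(3) refl] crossing_def by measurable
  hence "(\<lambda>x. \<integral>\<^sup>+ r. crossing (fst (fst x)) (snd (fst x)) (snd x) r \<partial>lborel) \<in> borel_measurable (\<gamma> \<Otimes>\<^sub>M lborel)"
    using lborel.borel_measurable_nn_integral[of "\<lambda>sp r. crossing (fst (fst sp)) (snd (fst sp)) (snd sp) r"]
    by (simp add: split_beta')
  thus "(\<lambda>p. \<integral>\<^sup>+ s. (\<integral>\<^sup>+ r. crossing (fst p) (snd p) s r \<partial>lborel) \<partial>lborel) \<in> borel_measurable \<gamma>"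
    using lborel.borel_measurable_nn_integral[of "\<lambda>p s. \<integral>\<^sup>+ r. crossing (fst p) (snd p) s r \<partial>lborel"]
    by (simp add: split_beta')
qed

(* Layer-cake formula for the transport cost of a measure on the plane: the cost depends on
   the measure only through its quadrant masses. *)
lemma cost_layer_cake:
  fixes \<gamma> :: "(real \<times> real) measure"
  assumes P: "prob_space \<gamma>" and S: "sets \<gamma> = sets (borel \<Otimes>\<^sub>M borel)"
  shows "(\<integral>\<^sup>+ p. ennreal ((fst p - snd p)^2) \<partial>\<gamma>) =
    2 * (\<integral>\<^sup>+ s. (\<integral>\<^sup>+ r. (if s < r then emeasure \<gamma> {p. fst p \<le> s \<and> r < snd p}
              + emeasure \<gamma> {p. snd p \<le> s \<and> r < fst p} else 0) \<partial>lborel) \<partial>lborel)"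
proof -
  interpret prob_space \<gamma> by (rule P)
  interpret PS: pair_sigma_finite lborel \<gamma>
    by (simp add: pair_sigma_finite_def lborel.sigma_finite_measure_axioms sigma_finite_measure_axioms)
  note meas = crossing_measurable[OF S]
  have "(\<integral>\<^sup>+ p. ennreal ((fst p - snd p)^2) \<partial>\<gamma>) =
      2 * (\<integral>\<^sup>+ p. (\<integral>\<^sup>+ s. (\<integral>\<^sup>+ r. crossing (fst p) (snd p) s r \<partial>lborel) \<partial>lborel) \<partial>\<gamma>)"
    by (simp add: sq_dist_layer_cake nn_integral_cmult meas(3))
  also have "(\<integral>\<^sup>+ p. (\<integral>\<^sup>+ s. (\<integral>\<^sup>+ r. crossing (fst p) (snd p) s r \<partial>lborel) \<partial>lborel) \<partial>\<gamma>) =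
     (\<integral>\<^sup>+ s. (\<integral>\<^sup>+ p. (\<integral>\<^sup>+ r. crossing (fst p) (snd p) s r \<partial>lborel) \<partial>\<gamma>) \<partial>lborel)"
    by (rule PS.Fubini'[of "\<lambda>s p. \<integral>\<^sup>+ r. crossing (fst p) (snd p) s r \<partial>lborel"]) (use meas(2) in simp)
  also have "\<dots> = (\<integral>\<^sup>+ s. (\<integral>\<^sup>+ r. (\<integral>\<^sup>+ p. crossing (fst p) (snd p) s r \<partial>\<gamma>) \<partial>lborel) \<partial>lborel)"
  proof (intro nn_integral_cong)
    fix s :: real
    show "(\<integral>\<^sup>+ p. (\<integral>\<^sup>+ r. crossing (fst p) (snd p) s r \<partial>lborel) \<partial>\<gamma>) =
          (\<integral>\<^sup>+ r. (\<integral>\<^sup>+ p. crossing (fst p) (snd p) s r \<partial>\<gamma>) \<partial>lborel)"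
      by (intro PS.Fubini'[of "\<lambda>r p. crossing (fst p) (snd p) s r"]) (use meas(1) in simp)
  qed
  finally show ?thesis by (simp add: crossing_integral[OF S])
qed

definition U01 :: "real measure" where
  "U01 = restrict_space lborel {0<..<1}"

lemma space_U01: "space U01 = {0<..<1}"
  by (simp add: U01_def space_restrict_space)

lemma prob_space_U01: "prob_space U01"
  unfolding U01_def
  by (auto simp add: emeasure_restrict_space space_restrict_space intro!: prob_spaceI)

lemma mono_measurable_U01:
  fixes f :: "real \<Rightarrow> real"
  shows "mono_on {0<..<1} f \<Longrightarrow> f \<in> borel_measurable U01"
  using borel_measurable_mono_on_fnc[of "{0<..<1}" f] unfolding U01_def
  by (subst measurable_cong_sets[OF sets_restrict_space_cong[OF sets_lborel] refl]) simp

definition quantile_fn :: "(real \<Rightarrow> real) \<Rightarrow> bool" where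
  "quantile_fn q \<longleftrightarrow> mono_on {0<..<1} q \<and> integrable U01 (\<lambda>u. (q u)^2)"

lemma quantile_fn_measurable: "quantile_fn q \<Longrightarrow> q \<in> borel_measurable U01"
  by (simp add: quantile_fn_def mono_measurable_U01)

lemma U2_quantile_fn:
  assumes "M \<in> U2"
  shows "\<exists>q. quantile_fn q \<and> M = distr U01 borel q"
proof -
  have P: "prob_space M" and S: "sets M = sets borel" and I: "integrable M (\<lambda>x. x^2)"
    using assms by (auto simp: U2_def)
  interpret cdf_distribution M
    by (simp add: cdf_distribution_def real_distribution_def real_distribution_axioms_def P S)
  define q where "q = (\<lambda>\<omega>. Inf {x. \<omega> \<le> cdf M x})"
  have mono: "mono_on {0<..<1} q" unfolding q_def by (rule mono_I)
  have distr: "distr U01 borel q = M" unfolding U01_def q_def by (rule distr_I_eq_M)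
  have "integrable U01 (\<lambda>u. (q u)^2)"
    using I mono_measurable_U01[OF mono] unfolding distr[symmetric]
    by (subst (asm) integrable_distr_eq) auto
  thus ?thesis using mono distr unfolding quantile_fn_def by blast
qed

lemma distr_quantile_fn_U2:
  assumes "quantile_fn q"
  shows "distr U01 borel q \<in> U2"
proof -
  interpret prob_space U01 by (rule prob_space_U01)
  have m: "q \<in> borel_measurable U01" by (rule quantile_fn_measurable[OF assms])
  have "integrable (distr U01 borel q) (\<lambda>x. x^2)"
    using assms m by (subst integrable_distr_eq) (auto simp: quantile_fn_def)
  thus ?thesis unfolding U2_def using m by (auto intro: prob_space_distr)
qed

lemma quantile_fn_diff_sq_integrable:
  assumes f: "quantile_fn f" and g: "quantile_fn g"
  shows "integrable U01 (\<lambda>u. (f u - g u)^2)"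
proof (rule Bochner_Integration.integrable_bound[of _ "\<lambda>u. 2 * (f u)^2 + 2 * (g u)^2"])
  show "integrable U01 (\<lambda>u. 2 * (f u)^2 + 2 * (g u)^2)"
    using f g by (auto simp: quantile_fn_def)
  show "(\<lambda>u. (f u - g u)^2) \<in> borel_measurable U01"
    using quantile_fn_measurable[OF f] quantile_fn_measurable[OF g] by measurable
  have "(a - b)^2 \<le> 2 * a^2 + 2 * b^2" for a b :: real
    using zero_le_power2[of "a + b"] by (simp add: power2_eq_square algebra_simps)
  thus "AE u in U01. norm ((f u - g u)^2) \<le> norm (2 * (f u)^2 + 2 * (g u)^2)"
    by (intro AE_I2) simp
qed

lemma coupling_prob_space:
  assumes "\<gamma> \<in> couplings \<mu> \<nu>" "prob_space \<mu>"
  shows "prob_space \<gamma>"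
proof -
  have S: "sets \<gamma> = sets (borel \<Otimes>\<^sub>M borel)" and D: "distr \<gamma> borel fst = \<mu>"
    using assms(1) by (auto simp: couplings_def)
  have m: "fst \<in> measurable \<gamma> borel" by (subst measurable_cong_sets[OF S refl]) simp
  have "emeasure \<gamma> (space \<gamma>) = emeasure (distr \<gamma> borel fst) (space (distr \<gamma> borel fst))"
    using m by (simp add: emeasure_distr)
  thus ?thesis using D prob_space.emeasure_space_1[OF assms(2)] by (intro prob_spaceI) simp
qed

lemma marginal_quadrant_bound:
  fixes a b :: "'a \<Rightarrow> real"
  assumes "prob_space \<gamma>" and [measurable]: "a \<in> borel_measurable \<gamma>" "b \<in> borel_measurable \<gamma>"
  shows "emeasure (distr \<gamma> borel a) {..s} - emeasure (distr \<gamma> borel b) {..r}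
         \<le> emeasure \<gamma> {p \<in> space \<gamma>. a p \<le> s \<and> r < b p}"
proof -
  interpret prob_space \<gamma> by fact
  have [measurable]: "{p \<in> space \<gamma>. a p \<le> s \<and> r < b p} \<in> sets \<gamma>" "{p \<in> space \<gamma>. b p \<le> r} \<in> sets \<gamma>"
    by measurable
  have "emeasure \<gamma> {p \<in> space \<gamma>. a p \<le> s}
        \<le> emeasure \<gamma> ({p \<in> space \<gamma>. a p \<le> s \<and> r < b p} \<union> {p \<in> space \<gamma>. b p \<le> r})"
    by (intro emeasure_mono) auto
  also have "\<dots> \<le> emeasure \<gamma> {p \<in> space \<gamma>. b p \<le> r} + emeasure \<gamma> {p \<in> space \<gamma>. a p \<le> s \<and> r < b p}"
    by (subst add.commute) (intro emeasure_subadditive; measurable)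
  finally show ?thesis
    by (simp add: emeasure_distr vimage_def Int_def conj_commute ennreal_minus_le_iff)
qed

(* For two monotone functions on U01 the bound is attained: their level sets are nested. *)
lemma comonotone_quadrant:
  fixes a b :: "real \<Rightarrow> real"
  assumes ma: "mono_on {0<..<1} a" and mb: "mono_on {0<..<1} b"
  shows "emeasure U01 {u \<in> space U01. a u \<le> s \<and> r < b u} =
         emeasure U01 {u \<in> space U01. a u \<le> s} - emeasure U01 {u \<in> space U01. b u \<le> r}"
proof -
  interpret prob_space U01 by (rule prob_space_U01)
  define D1 where "D1 = {u \<in> space U01. a u \<le> s}"
  define D2 where "D2 = {u \<in> space U01. b u \<le> r}"
  have sets_D [measurable]: "D1 \<in> sets U01" "D2 \<in> sets U01"
    unfolding D1_def D2_def using mono_measurable_U01[OF ma] mono_measurable_U01[OF mb] by measurable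
  have nested: "D1 \<subseteq> D2 \<or> D2 \<subseteq> D1"
  proof (rule ccontr)
    assume "\<not> (D1 \<subseteq> D2 \<or> D2 \<subseteq> D1)"
    then obtain u v where u: "u \<in> D1" "u \<notin> D2" and v: "v \<in> D2" "v \<notin> D1" by auto
    hence uv: "u \<in> {0<..<1}" "v \<in> {0<..<1}" by (auto simp: D1_def D2_def space_U01)
    show False
      using u v mono_onD[OF mb uv] mono_onD[OF ma uv(2,1)]
      by (cases "u \<le> v") (auto simp: D1_def D2_def)
  qed
  have "{u \<in> space U01. a u \<le> s \<and> r < b u} = D1 - D2" by (auto simp: D1_def D2_def)
  moreover have "emeasure U01 (D1 - D2) = emeasure U01 D1 - emeasure U01 D2"
  proof (cases "D1 \<subseteq> D2")
    case True
    have "D1 - D2 = {}" using True by auto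
    moreover have "emeasure U01 D1 - emeasure U01 D2 = 0"
      using emeasure_mono[OF True sets_D(2)] by (simp add: diff_eq_0_iff_ennreal less_top[symmetric])
    ultimately show ?thesis by (metis emeasure_empty)
  next
    case False
    thus ?thesis using nested by (intro emeasure_Diff) auto
  qed
  ultimately show ?thesis by (simp add: D1_def D2_def)
qed

lemma comonotone_quadrant_minimal:
  fixes f g :: "real \<Rightarrow> real" and a b :: "'a \<Rightarrow> real"
  assumes f: "mono_on {0<..<1} f" and g: "mono_on {0<..<1} g"
    and \<gamma>: "prob_space \<gamma>" "a \<in> borel_measurable \<gamma>" "b \<in> borel_measurable \<gamma>"
    and marg: "distr \<gamma> borel a = distr U01 borel f" "distr \<gamma> borel b = distr U01 borel g"
  shows "emeasure U01 {u \<in> space U01. f u \<le> s \<and> r < g u} \<le> emeasure \<gamma> {p \<in> space \<gamma>. a p \<le> s \<and> r < b p}"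
proof -
  have [measurable]: "f \<in> borel_measurable U01" "g \<in> borel_measurable U01"
    using f g by (blast intro: mono_measurable_U01)+
  have "emeasure (distr U01 borel h) {..c} = emeasure U01 {u \<in> space U01. h u \<le> c}"
    if [measurable]: "h \<in> borel_measurable U01" for h :: "real \<Rightarrow> real" and c
    by (subst emeasure_distr) (auto intro!: arg_cong2[where f=emeasure])
  hence "emeasure U01 {u \<in> space U01. f u \<le> s \<and> r < g u}
        = emeasure (distr U01 borel f) {..s} - emeasure (distr U01 borel g) {..r}"
    by (simp add: comonotone_quadrant[OF f g])
  thus ?thesis using marginal_quadrant_bound[OF \<gamma>, of s r] by (simp add: marg)
qed

lemma comonotone_coupling_optimal:
  fixes f g :: "real \<Rightarrow> real"
  assumes f: "mono_on {0<..<1} f" and g: "mono_on {0<..<1} g"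
    and \<gamma>: "\<gamma> \<in> couplings (distr U01 borel f) (distr U01 borel g)"
  shows "(\<integral>\<^sup>+ p. ennreal ((fst p - snd p)^2) \<partial>distr U01 (borel \<Otimes>\<^sub>M borel) (\<lambda>u. (f u, g u)))
         \<le> (\<integral>\<^sup>+ p. ennreal ((fst p - snd p)^2) \<partial>\<gamma>)"
proof -
  interpret U: prob_space U01 by (rule prob_space_U01)
  define \<gamma>0 where "\<gamma>0 = distr U01 (borel \<Otimes>\<^sub>M borel) (\<lambda>u. (f u, g u))"
  have [measurable]: "f \<in> borel_measurable U01" "g \<in> borel_measurable U01"
    using f g by (blast intro: mono_measurable_U01)+
  have pm: "(\<lambda>u. (f u, g u)) \<in> measurable U01 (borel \<Otimes>\<^sub>M borel)" by measurable
  have S: "sets \<gamma> = sets (borel \<Otimes>\<^sub>M borel)"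
    and marg: "distr \<gamma> borel fst = distr U01 borel f" "distr \<gamma> borel snd = distr U01 borel g"
    using \<gamma> by (auto simp: couplings_def)
  have P: "prob_space \<gamma>" by (rule coupling_prob_space[OF \<gamma> U.prob_space_distr]) simp
  have sp: "space \<gamma> = UNIV" using sets_eq_imp_space_eq[OF S] by (simp add: space_pair_measure)
  have meas: "fst \<in> borel_measurable \<gamma>" "snd \<in> borel_measurable \<gamma>"
    by (simp_all add: measurable_cong_sets[OF S refl])
  have "emeasure \<gamma>0 {p. fst p \<le> s \<and> r < snd p} = emeasure U01 {u \<in> space U01. f u \<le> s \<and> r < g u}"
    "emeasure \<gamma>0 {p. snd p \<le> s \<and> r < fst p} = emeasure U01 {u \<in> space U01. g u \<le> s \<and> r < f u}"
    for s r
    unfolding \<gamma>0_def using pm quadrants_measurable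
    by (subst emeasure_distr; auto intro!: arg_cong2[where f=emeasure])+
  hence "emeasure \<gamma>0 {p. fst p \<le> s \<and> r < snd p} \<le> emeasure \<gamma> {p. fst p \<le> s \<and> r < snd p}"
    "emeasure \<gamma>0 {p. snd p \<le> s \<and> r < fst p} \<le> emeasure \<gamma> {p. snd p \<le> s \<and> r < fst p}"
    for s r
    using comonotone_quadrant_minimal[OF f g P meas marg, of s r]
      comonotone_quadrant_minimal[OF g f P meas(2,1) marg(2,1), of s r]
    by (simp_all add: sp)
  moreover have "prob_space \<gamma>0" "sets \<gamma>0 = sets (borel \<Otimes>\<^sub>M borel)"
    unfolding \<gamma>0_def by (simp_all add: U.prob_space_distr[OF pm])
  ultimately show ?thesis
    unfolding \<gamma>0_def[symmetric] cost_layer_cake[OF P S]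
    by (subst cost_layer_cake) (auto intro!: mult_left_mono nn_integral_mono add_mono)
qed

lemma W2_quantile:
  assumes f: "quantile_fn f" and g: "quantile_fn g"
  shows "(W2 (distr U01 borel f) (distr U01 borel g))^2 = (\<integral> u. (f u - g u)^2 \<partial>U01)"
proof -
  define \<gamma>0 where "\<gamma>0 = distr U01 (borel \<Otimes>\<^sub>M borel) (\<lambda>u. (f u, g u))"
  have [measurable]: "f \<in> borel_measurable U01" "g \<in> borel_measurable U01"
    using f g by (simp_all add: quantile_fn_measurable)
  have pm: "(\<lambda>u. (f u, g u)) \<in> measurable U01 (borel \<Otimes>\<^sub>M borel)" by measurable
  have "\<gamma>0 \<in> couplings (distr U01 borel f) (distr U01 borel g)"
    unfolding couplings_def \<gamma>0_def using pm by (simp add: distr_distr comp_def)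
  hence "(INF \<gamma>\<in>couplings (distr U01 borel f) (distr U01 borel g). \<integral>\<^sup>+ p. ennreal ((fst p - snd p)^2) \<partial>\<gamma>)
         = (\<integral>\<^sup>+ p. ennreal ((fst p - snd p)^2) \<partial>\<gamma>0)"
    using f g unfolding quantile_fn_def \<gamma>0_def
    by (intro antisym INF_lower INF_greatest comonotone_coupling_optimal) auto
  also have "\<dots> = (\<integral>\<^sup>+ u. ennreal ((f u - g u)^2) \<partial>U01)"
    unfolding \<gamma>0_def using pm by (subst nn_integral_distr) auto
  also have "\<dots> = ennreal (\<integral> u. (f u - g u)^2 \<partial>U01)"
    by (rule nn_integral_eq_integral[OF quantile_fn_diff_sq_integrable[OF f g]]) simp
  finally show ?thesis unfolding W2_def by simp
qed

lemma weighted_sq_decomposition: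
  fixes a y :: "'i \<Rightarrow> real"
  assumes "(\<Sum>j\<in>J. a j) = 1"
  shows "(\<Sum>j\<in>J. a j * (x - y j)^2)
         = (x - (\<Sum>j\<in>J. a j * y j))^2 + (\<Sum>j\<in>J. a j * ((\<Sum>k\<in>J. a k * y k) - y j)^2)"
proof -
  define m where "m = (\<Sum>k\<in>J. a k * y k)"
  have expand: "(\<Sum>j\<in>J. a j * (z - y j)^2) = z^2 - 2 * z * m + (\<Sum>j\<in>J. a j * (y j)^2)" for z
  proof -
    have "(\<Sum>j\<in>J. a j * (z - y j)^2) = (\<Sum>j\<in>J. z^2 * a j - 2 * z * (a j * y j) + a j * (y j)^2)"
      by (intro sum.cong) (auto simp: power2_eq_square algebra_simps)
    also have "\<dots> = z^2 * (\<Sum>j\<in>J. a j) - 2 * z * m + (\<Sum>j\<in>J. a j * (y j)^2)"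
      by (simp add: sum.distrib sum_subtractf sum_distrib_left m_def)
    finally show ?thesis using assms by simp
  qed
  show ?thesis unfolding m_def[symmetric] expand
    by (simp add: power2_eq_square algebra_simps)
qed

lemma weighted_mean_sq_le:
  fixes a y :: "'i \<Rightarrow> real"
  assumes "(\<Sum>j\<in>J. a j) = 1" "\<And>j. j \<in> J \<Longrightarrow> 0 \<le> a j"
  shows "(\<Sum>j\<in>J. a j * y j)^2 \<le> (\<Sum>j\<in>J. a j * (y j)^2)"
  using weighted_sq_decomposition[OF assms(1), of 0 y] assms(2)
    sum_nonneg[of J "\<lambda>j. a j * ((\<Sum>k\<in>J. a k * y k) - y j)^2"]
  by simp

lemma quantile_fn_convex_comb:
  fixes f :: "'i \<Rightarrow> real \<Rightarrow> real"
  assumes fin: "finite J" and nonneg: "\<And>j. j \<in> J \<Longrightarrow> 0 \<le> a j" and total: "(\<Sum>j\<in>J. a j) = 1"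
    and f: "\<And>j. j \<in> J \<Longrightarrow> quantile_fn (f j)"
  shows "quantile_fn (\<lambda>u. \<Sum>j\<in>J. a j * f j u)"
  unfolding quantile_fn_def
proof
  show "mono_on {0<..<1} (\<lambda>u. \<Sum>j\<in>J. a j * f j u)"
  proof (intro mono_onI sum_mono mult_left_mono)
    fix r s j assume "r \<in> {0<..<1::real}" "s \<in> {0<..<1::real}" "r \<le> s" "j \<in> J"
    thus "f j r \<le> f j s" using f[of j] by (auto simp: quantile_fn_def intro: mono_onD)
    show "0 \<le> a j" using nonneg \<open>j \<in> J\<close> .
  qed
  have [measurable]: "\<And>j. j \<in> J \<Longrightarrow> f j \<in> borel_measurable U01"
    using f quantile_fn_measurable by blast
  show "integrable U01 (\<lambda>u. (\<Sum>j\<in>J. a j * f j u)^2)"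
  proof (rule Bochner_Integration.integrable_bound[of _ "\<lambda>u. \<Sum>j\<in>J. a j * (f j u)^2"])
    show "integrable U01 (\<lambda>u. \<Sum>j\<in>J. a j * (f j u)^2)" using f by (auto simp: quantile_fn_def)
    show "AE u in U01. norm ((\<Sum>j\<in>J. a j * f j u)^2) \<le> norm (\<Sum>j\<in>J. a j * (f j u)^2)"
      using weighted_mean_sq_le[OF total nonneg] nonneg by (intro AE_I2) (simp add: sum_nonneg)
  qed measurable
qed

lemma weighted_W2_cost_split:
  fixes f :: "'i \<Rightarrow> real \<Rightarrow> real"
  assumes fin: "finite J" and nonneg: "\<And>j. j \<in> J \<Longrightarrow> 0 \<le> a j" and total: "(\<Sum>j\<in>J. a j) = 1"
    and f: "\<And>j. j \<in> J \<Longrightarrow> quantile_fn (f j)" and q: "quantile_fn q"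
  defines "qb \<equiv> (\<lambda>u. \<Sum>j\<in>J. a j * f j u)"
  shows "(\<Sum>j\<in>J. a j * (W2 (distr U01 borel q) (distr U01 borel (f j)))^2)
         = (\<integral> u. (q u - qb u)^2 \<partial>U01) + (\<Sum>j\<in>J. a j * (W2 (distr U01 borel qb) (distr U01 borel (f j)))^2)"
proof -
  have qb: "quantile_fn qb" unfolding qb_def by (rule quantile_fn_convex_comb[OF fin nonneg total f])
  have cost: "(\<Sum>j\<in>J. a j * (W2 (distr U01 borel p) (distr U01 borel (f j)))^2)
              = (\<integral> u. (\<Sum>j\<in>J. a j * (p u - f j u)^2) \<partial>U01)" if p: "quantile_fn p" for p
    using W2_quantile[OF p f] quantile_fn_diff_sq_integrable[OF p f] by simp
  have "(\<integral> u. (\<Sum>j\<in>J. a j * (q u - f j u)^2) \<partial>U01)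
        = (\<integral> u. (q u - qb u)^2 + (\<Sum>j\<in>J. a j * (qb u - f j u)^2) \<partial>U01)"
    unfolding qb_def by (intro Bochner_Integration.integral_cong refl weighted_sq_decomposition[OF total])
  also have "\<dots> = (\<integral> u. (q u - qb u)^2 \<partial>U01) + (\<integral> u. (\<Sum>j\<in>J. a j * (qb u - f j u)^2) \<partial>U01)"
    using quantile_fn_diff_sq_integrable[OF q qb] quantile_fn_diff_sq_integrable[OF qb f]
    by (subst Bochner_Integration.integral_add) auto
  finally show ?thesis using cost[OF q] cost[OF qb] by simp
qed

lemma barycenter_quantile:
  fixes f :: "'i \<Rightarrow> real \<Rightarrow> real"
  assumes fin: "finite J" and nonneg: "\<And>j. j \<in> J \<Longrightarrow> 0 \<le> a j" and total: "(\<Sum>j\<in>J. a j) = 1"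
    and f: "\<And>j. j \<in> J \<Longrightarrow> quantile_fn (f j)"
    and argmin: "is_argmin_U2 (\<lambda>\<eta>. \<Sum>j\<in>J. a j * (W2 \<eta> (distr U01 borel (f j)))^2) \<eta>"
  shows "\<eta> = distr U01 borel (\<lambda>u. \<Sum>j\<in>J. a j * f j u)"
proof -
  define qb where "qb = (\<lambda>u. \<Sum>j\<in>J. a j * f j u)"
  have qb: "quantile_fn qb" unfolding qb_def by (rule quantile_fn_convex_comb[OF fin nonneg total f])
  obtain q where q: "quantile_fn q" and \<eta>: "\<eta> = distr U01 borel q"
    using argmin U2_quantile_fn unfolding is_argmin_U2_def by blast
  define cost where "cost \<xi> = (\<Sum>j\<in>J. a j * (W2 \<xi> (distr U01 borel (f j)))^2)" for \<xi>
  have split: "cost (distr U01 borel p) = (\<integral> u. (p u - qb u)^2 \<partial>U01) + cost (distr U01 borel qb)"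
    if "quantile_fn p" for p
    unfolding cost_def qb_def by (rule weighted_W2_cost_split[OF fin nonneg total]) (use f that in auto)
  have "cost \<eta> \<le> cost (distr U01 borel qb)"
    using argmin distr_quantile_fn_U2[OF qb] unfolding is_argmin_U2_def cost_def by blast
  hence "(\<integral> u. (q u - qb u)^2 \<partial>U01) \<le> 0"
    unfolding \<eta> split[OF q] by simp
  hence "(\<integral> u. (q u - qb u)^2 \<partial>U01) = 0" by (simp add: antisym)
  hence "AE u in U01. q u = qb u"
    using integral_nonneg_eq_0_iff_AE[OF quantile_fn_diff_sq_integrable[OF q qb]] by simp
  hence "distr U01 borel q = distr U01 borel qb"
    using quantile_fn_measurable[OF q] quantile_fn_measurable[OF qb] by (intro distr_cong_AE) auto
  thus ?thesis unfolding \<eta> qb_def .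
qed

definition avg :: "nat \<Rightarrow> (nat \<Rightarrow> real) \<Rightarrow> real" where
  "avg n x = (\<Sum>k<n. x k) / real n"

definition disagreement :: "nat \<Rightarrow> (nat \<Rightarrow> real) \<Rightarrow> real" where
  "disagreement n x = (\<Sum>i<n. (x i - avg n x)^2)"

definition mix :: "nat \<Rightarrow> (nat \<Rightarrow> nat \<Rightarrow> real) \<Rightarrow> (nat \<Rightarrow> real) \<Rightarrow> nat \<Rightarrow> real" where
  "mix n w x i = (\<Sum>j<n. w i j * x j)"

lemma disagreement_nonneg: "0 \<le> disagreement n x"
  unfolding disagreement_def by (intro sum_nonneg) auto

lemma avg_mix:
  assumes col: "\<And>j. j < n \<Longrightarrow> (\<Sum>i<n. w i j) = 1"
  shows "avg n (mix n w x) = avg n x"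
proof -
  have "(\<Sum>i<n. \<Sum>j<n. w i j * x j) = (\<Sum>j<n. (\<Sum>i<n. w i j) * x j)"
    by (subst sum.swap) (simp add: sum_distrib_right)
  thus ?thesis by (simp add: avg_def mix_def col)
qed

lemma mix_disagreement_identity:
  assumes row: "\<And>i. i < n \<Longrightarrow> (\<Sum>j<n. w i j) = 1"
    and col: "\<And>j. j < n \<Longrightarrow> (\<Sum>i<n. w i j) = 1"
  shows "disagreement n (mix n w x)
         = disagreement n x - (\<Sum>i<n. \<Sum>j<n. w i j * (mix n w x i - x j)^2)"
proof -
  define m where "m = avg n x"
  have local: "(\<Sum>j<n. w i j * (m - x j)^2)
               = (mix n w x i - m)^2 + (\<Sum>j<n. w i j * (mix n w x i - x j)^2)" if "i < n" for i
    using weighted_sq_decomposition[where J="{..<n}" and a="w i" and x=m and y=x] row[OF that]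
    by (simp add: mix_def power2_commute)
  have "(\<Sum>i<n. \<Sum>j<n. w i j * (m - x j)^2) = (\<Sum>j<n. (\<Sum>i<n. w i j) * (m - x j)^2)"
    by (subst sum.swap) (simp add: sum_distrib_right)
  also have "\<dots> = disagreement n x"
    by (simp add: col disagreement_def m_def power2_commute)
  finally have "disagreement n x = (\<Sum>i<n. (mix n w x i - m)^2) + (\<Sum>i<n. \<Sum>j<n. w i j * (mix n w x i - x j)^2)"
    using local by (simp add: sum.distrib)
  moreover have "disagreement n (mix n w x) = (\<Sum>i<n. (mix n w x i - m)^2)"
    by (simp add: disagreement_def avg_mix[OF col] m_def)
  ultimately show ?thesis by simp
qed

lemma two_point_spread:
  fixes a y :: "'i \<Rightarrow> real"
  assumes fin: "finite J" and ij: "i \<in> J" "j \<in> J" and nonneg: "\<And>k. k \<in> J \<Longrightarrow> 0 \<le> a k"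
    and \<delta>: "0 \<le> \<delta>" "\<delta> \<le> a i" "\<delta> \<le> a j"
  shows "\<delta> / 2 * (y i - y j)^2 \<le> (\<Sum>k\<in>J. a k * (m - y k)^2)"
proof (cases "i = j")
  case True
  thus ?thesis using nonneg by (simp add: sum_nonneg)
next
  case False
  have "(y i - y j)^2 \<le> 2 * (m - y i)^2 + 2 * (m - y j)^2"
    using zero_le_power2[of "2 * m - y i - y j"] by (simp add: power2_eq_square algebra_simps)
  hence "\<delta> / 2 * (y i - y j)^2 \<le> \<delta> / 2 * (2 * (m - y i)^2 + 2 * (m - y j)^2)"
    using \<delta>(1) by (intro mult_left_mono) auto
  also have "\<dots> = \<delta> * (m - y i)^2 + \<delta> * (m - y j)^2" by (simp add: algebra_simps)
  also have "\<dots> \<le> a i * (m - y i)^2 + a j * (m - y j)^2"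
    using \<delta> by (intro add_mono mult_right_mono) auto
  also have "\<dots> = (\<Sum>k\<in>{i, j}. a k * (m - y k)^2)" using False by simp
  also have "\<dots> \<le> (\<Sum>k\<in>J. a k * (m - y k)^2)"
    using fin ij nonneg by (intro sum_mono2) auto
  finally show ?thesis .
qed

lemma path_bound:
  fixes x :: "'a \<Rightarrow> real"
  assumes edge: "\<And>a b. R a b \<Longrightarrow> \<bar>x a - x b\<bar> \<le> c"
  shows "(R ^^ m) i k \<Longrightarrow> \<bar>x i - x k\<bar> \<le> real m * c"
proof (induction m arbitrary: k)
  case (Suc m)
  from Suc.prems obtain y where "(R ^^ m) i y" and "R y k" by (rule relpowp_Suc_E)
  hence "\<bar>x i - x y\<bar> + \<bar>x y - x k\<bar> \<le> real m * c + c" using Suc.IH edge by (intro add_mono)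
  thus ?case by (simp add: algebra_simps)
qed simp

lemma mix_iterates:
  assumes col: "\<And>j. j < n \<Longrightarrow> (\<Sum>i<n. w i j) = 1"
    and contraction: "\<And>y. disagreement n (mix n w y) \<le> \<rho> * disagreement n y" and "0 \<le> \<rho>"
    and step: "\<And>t. x (Suc t) = mix n w (x t)"
  shows "avg n (x t) = avg n (x 0)" and "disagreement n (x t) \<le> \<rho> ^ t * disagreement n (x 0)"
proof -
  show "avg n (x t) = avg n (x 0)"
    by (induction t) (simp_all add: step avg_mix[OF col])
  show "disagreement n (x t) \<le> \<rho> ^ t * disagreement n (x 0)"
  proof (induction t)
    case (Suc t)
    have "disagreement n (x (Suc t)) \<le> \<rho> * disagreement n (x t)" by (simp add: step contraction)
    also have "\<dots> \<le> \<rho> * (\<rho> ^ t * disagreement n (x 0))" using Suc.IH \<open>0 \<le> \<rho>\<close> by (rule mult_left_mono)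
    finally show ?case by simp
  qed simp
qed

lemma geometric_rate_from_squares:
  fixes d :: "nat \<Rightarrow> real"
  assumes "0 \<le> A" "0 < \<rho>" "\<rho> < 1" and d: "\<And>t. 0 \<le> d t" "\<And>t. (d t)^2 \<le> \<rho> ^ t * A"
  shows "\<exists>C>0. \<exists>r. 0 < r \<and> r < 1 \<and> (\<forall>t. d t \<le> C * r ^ t)"
proof (intro exI conjI allI)
  show "0 < sqrt A + 1" "0 < sqrt \<rho>" "sqrt \<rho> < 1" using assms by (auto simp: add_nonneg_pos)
  fix t
  have "d t = sqrt ((d t)^2)" using d(1) by simp
  also have "\<dots> \<le> sqrt (\<rho> ^ t * A)" using d(2) by (rule real_sqrt_le_mono)
  also have "\<dots> = sqrt A * sqrt \<rho> ^ t" by (simp add: real_sqrt_mult real_sqrt_power)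
  also have "\<dots> \<le> (sqrt A + 1) * sqrt \<rho> ^ t" using assms by (intro mult_right_mono) auto
  finally show "d t \<le> (sqrt A + 1) * sqrt \<rho> ^ t" .
qed

locale consensus_weights =
  fixes n :: nat and E :: "nat \<Rightarrow> nat \<Rightarrow> bool" and w :: "nat \<Rightarrow> nat \<Rightarrow> real"
  assumes npos: "0 < n"
    and self_loop: "\<And>i. i < n \<Longrightarrow> E i i"
    and connected: "\<And>i j. i < n \<Longrightarrow> j < n \<Longrightarrow> (\<lambda>a b. a < n \<and> b < n \<and> E a b)\<^sup>*\<^sup>* i j"
    and w_pos: "\<And>i j. i < n \<Longrightarrow> j < n \<Longrightarrow> (w i j > 0 \<longleftrightarrow> E i j)"
    and w_zero: "\<And>i j. i < n \<Longrightarrow> j < n \<Longrightarrow> \<not> E i j \<Longrightarrow> w i j = 0"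
    and row_stoch: "\<And>i. i < n \<Longrightarrow> (\<Sum>j<n. w i j) = 1"
    and col_stoch: "\<And>j. j < n \<Longrightarrow> (\<Sum>i<n. w i j) = 1"
begin

lemma w_nonneg: "i < n \<Longrightarrow> j < n \<Longrightarrow> 0 \<le> w i j"
  using w_pos w_zero by (metis less_eq_real_def)

definition edge_energy :: "(nat \<Rightarrow> real) \<Rightarrow> real" where
  "edge_energy x = (\<Sum>i<n. \<Sum>j<n. if E i j then (x i - x j)^2 else 0)"

lemma edge_energy_nonneg: "0 \<le> edge_energy x"
  unfolding edge_energy_def by (intro sum_nonneg) auto

lemma edge_le_energy:
  assumes "i < n" "j < n" "E i j"
  shows "(x i - x j)^2 \<le> edge_energy x"
proof -
  have "(x i - x j)^2 \<le> (\<Sum>j<n. if E i j then (x i - x j)^2 else 0)"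
    using member_le_sum[of j "{..<n}" "\<lambda>j. if E i j then (x i - x j)^2 else 0"] assms by auto
  also have "\<dots> \<le> edge_energy x"
    unfolding edge_energy_def using assms(1)
    by (intro member_le_sum[of i "{..<n}" "\<lambda>i. \<Sum>j<n. if E i j then (x i - x j)^2 else 0"] sum_nonneg)
       auto
  finally show ?thesis .
qed

lemma bounded_path_length:
  "\<exists>L. \<forall>i<n. \<forall>k<n. \<exists>m\<le>L. ((\<lambda>a b. a < n \<and> b < n \<and> E a b) ^^ m) i k"
proof -
  have "\<forall>p\<in>{..<n} \<times> {..<n}. \<exists>m. ((\<lambda>a b. a < n \<and> b < n \<and> E a b) ^^ m) (fst p) (snd p)"
    using connected by (auto simp: rtranclp_power)
  from bchoice[OF this] obtain M
    where M: "\<forall>p\<in>{..<n} \<times> {..<n}. ((\<lambda>a b. a < n \<and> b < n \<and> E a b) ^^ M p) (fst p) (snd p)" ..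
  show ?thesis
  proof (rule exI[of _ "\<Sum>p\<in>{..<n} \<times> {..<n}. M p"], intro allI impI)
    fix i k assume "i < n" "k < n"
    hence "M (i, k) \<le> (\<Sum>p\<in>{..<n} \<times> {..<n}. M p)" by (intro member_le_sum) auto
    thus "\<exists>m\<le>\<Sum>p\<in>{..<n} \<times> {..<n}. M p. ((\<lambda>a b. a < n \<and> b < n \<and> E a b) ^^ m) i k"
      using M \<open>i < n\<close> \<open>k < n\<close> by force
  qed
qed

lemma poincare: "\<exists>K>0. \<forall>x. disagreement n x \<le> K * edge_energy x"
proof -
  obtain L where L: "\<And>i k. i < n \<Longrightarrow> k < n \<Longrightarrow> \<exists>m\<le>L. ((\<lambda>a b. a < n \<and> b < n \<and> E a b) ^^ m) i k"
    using bounded_path_length by blast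
  have "disagreement n x \<le> (real n * (real L)^2 + 1) * edge_energy x" for x
  proof -
    have pair: "(x i - x k)^2 \<le> (real L)^2 * edge_energy x" if ik: "i < n" "k < n" for i k
    proof -
      obtain m where "m \<le> L" and path: "((\<lambda>a b. a < n \<and> b < n \<and> E a b) ^^ m) i k"
        using L[OF ik] by blast
      have "\<bar>x a - x b\<bar> \<le> sqrt (edge_energy x)" if "a < n \<and> b < n \<and> E a b" for a b
        using real_sqrt_le_mono[OF edge_le_energy[of a b x]] that by simp
      hence "\<bar>x i - x k\<bar> \<le> real m * sqrt (edge_energy x)"
        by (rule path_bound[OF _ path])
      also have "\<dots> \<le> real L * sqrt (edge_energy x)"
        using \<open>m \<le> L\<close> edge_energy_nonneg by (intro mult_right_mono) auto
      finally have "\<bar>x i - x k\<bar>^2 \<le> (real L * sqrt (edge_energy x))^2"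
        by (intro power_mono) auto
      thus ?thesis using edge_energy_nonneg[of x] by (simp add: power_mult_distrib)
    qed
    have each: "(x i - avg n x)^2 \<le> (real L)^2 * edge_energy x" if "i < n" for i
    proof -
      have "x i - avg n x = (\<Sum>k<n. (1 / real n) * (x i - x k))"
        using npos by (simp add: avg_def sum_subtractf sum_divide_distrib[symmetric] field_simps)
      hence "(x i - avg n x)^2 \<le> (\<Sum>k<n. (1 / real n) * (x i - x k)^2)"
        using weighted_mean_sq_le[where J="{..<n}" and a="\<lambda>_. 1 / real n" and y="\<lambda>k. x i - x k"] npos by simp
      also have "\<dots> \<le> (\<Sum>k<n. (1 / real n) * ((real L)^2 * edge_energy x))"
        using pair[OF that] by (intro sum_mono mult_left_mono) auto
      finally show ?thesis using npos by simp
    qed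
    have "disagreement n x \<le> real n * ((real L)^2 * edge_energy x)"
      unfolding disagreement_def using sum_mono[of "{..<n}", OF each] by simp
    thus ?thesis using edge_energy_nonneg[of x] by (simp add: algebra_simps)
  qed
  thus ?thesis by (intro exI[of _ "real n * (real L)^2 + 1"]) (simp add: add_nonneg_pos)
qed

lemma uniform_edge_weight: "\<exists>\<delta>>0. \<forall>i<n. \<forall>j<n. E i j \<longrightarrow> \<delta> \<le> w i j"
proof -
  define D where "D = (\<lambda>(i, j). w i j) ` {p \<in> {..<n} \<times> {..<n}. E (fst p) (snd p)}"
  have "finite D" "D \<noteq> {}" unfolding D_def using self_loop[OF npos] npos by auto
  moreover have "\<forall>d\<in>D. 0 < d" unfolding D_def using w_pos by auto
  moreover have "\<forall>i<n. \<forall>j<n. E i j \<longrightarrow> Min D \<le> w i j"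
    using \<open>finite D\<close> by (auto simp: D_def image_iff intro!: Min_le)
  ultimately show ?thesis by (intro exI[of _ "Min D"]) auto
qed

lemma energy_dissipation:
  "\<exists>c>0. \<forall>x. disagreement n (mix n w x) \<le> disagreement n x - c * edge_energy x"
proof -
  obtain \<delta> where \<delta>: "0 < \<delta>" "\<And>i j. i < n \<Longrightarrow> j < n \<Longrightarrow> E i j \<Longrightarrow> \<delta> \<le> w i j"
    using uniform_edge_weight by blast
  have "disagreement n (mix n w x) \<le> disagreement n x - \<delta> / (2 * real n) * edge_energy x" for x
  proof -
    define B where "B i = (\<Sum>j<n. w i j * (mix n w x i - x j)^2)" for i
    have row: "(\<Sum>j<n. if E i j then \<delta> / 2 * (x i - x j)^2 else 0) \<le> real n * B i" if "i < n" for i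
    proof -
      have "(if E i j then \<delta> / 2 * (x i - x j)^2 else 0) \<le> B i" if "j < n" for j
        using two_point_spread[of "{..<n}" i j "w i" \<delta> x "mix n w x i"] w_nonneg \<delta> self_loop
          \<open>i < n\<close> that sum_nonneg[of "{..<n}" "\<lambda>j. w i j * (mix n w x i - x j)^2"]
        by (auto simp: B_def)
      hence "(\<Sum>j<n. if E i j then \<delta> / 2 * (x i - x j)^2 else 0) \<le> (\<Sum>j<n. B i)"
        by (intro sum_mono) auto
      thus ?thesis by simp
    qed
    have "\<delta> / 2 * edge_energy x = (\<Sum>i<n. \<Sum>j<n. if E i j then \<delta> / 2 * (x i - x j)^2 else 0)"
      unfolding edge_energy_def by (simp add: sum_distrib_left if_distrib cong: if_cong)
    also have "\<dots> \<le> real n * (\<Sum>i<n. B i)"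
      using sum_mono[of "{..<n}", OF row] by (simp add: sum_distrib_left)
    finally have "\<delta> / (2 * real n) * edge_energy x \<le> (\<Sum>i<n. B i)"
      using npos by (simp add: field_simps)
    thus ?thesis
      using mix_disagreement_identity[OF row_stoch col_stoch, of x] by (simp add: B_def)
  qed
  thus ?thesis using \<delta>(1) npos by (intro exI[of _ "\<delta> / (2 * real n)"]) auto
qed

(* Poincare plus dissipation: averaging contracts the disagreement geometrically. *)
lemma disagreement_contraction:
  "\<exists>\<rho>. 0 < \<rho> \<and> \<rho> < 1 \<and> (\<forall>x. disagreement n (mix n w x) \<le> \<rho> * disagreement n x)"
proof -
  obtain K where K: "0 < K" "\<And>x. disagreement n x \<le> K * edge_energy x"
    using poincare by blast
  obtain c where c: "0 < c" "\<And>x. disagreement n (mix n w x) \<le> disagreement n x - c * edge_energy x"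
    using energy_dissipation by blast
  define \<rho> where "\<rho> = max (1 / 2) (1 - c / K)"
  have "disagreement n (mix n w x) \<le> \<rho> * disagreement n x" for x
  proof -
    have "c / K * disagreement n x \<le> c * edge_energy x"
      using mult_left_mono[OF K(2)[of x], of "c / K"] K(1) c(1) by simp
    hence "disagreement n (mix n w x) \<le> (1 - c / K) * disagreement n x"
      using c(2)[of x] by (simp add: algebra_simps)
    also have "\<dots> \<le> \<rho> * disagreement n x"
      unfolding \<rho>_def by (intro mult_right_mono disagreement_nonneg) auto
    finally show ?thesis .
  qed
  moreover have "0 < \<rho>" "\<rho> < 1" unfolding \<rho>_def using c(1) K(1) by auto
  ultimately show ?thesis by blast
qed


lemma sum_neighbours:
  "i < n \<Longrightarrow> (\<Sum>j\<in>{j. j < n \<and> E i j}. w i j * g j) = (\<Sum>j<n. w i j * g j)"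
  using w_zero by (intro sum.mono_neutral_left) auto

lemma uniform_barycenter:
  assumes f: "\<And>j. j < n \<Longrightarrow> quantile_fn (f j)"
    and argmin: "is_argmin_U2 (\<lambda>\<eta>. (1 / real n) * (\<Sum>j<n. (W2 \<eta> (distr U01 borel (f j)))^2)) \<eta>"
  shows "\<eta> = distr U01 borel (\<lambda>u. avg n (\<lambda>j. f j u))"
proof -
  have "\<eta> = distr U01 borel (\<lambda>u. \<Sum>j<n. 1 / real n * f j u)"
    using argmin npos by (intro barycenter_quantile) (auto simp: f sum_distrib_left)
  thus ?thesis by (simp add: avg_def sum_divide_distrib)
qed

lemma quantile_dynamics:
  fixes \<mu> :: "nat \<Rightarrow> nat \<Rightarrow> real measure"
  assumes init: "\<And>i. i < n \<Longrightarrow> \<mu> i 0 \<in> U2"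
    and update: "\<And>i t. i < n \<Longrightarrow>
        is_argmin_U2 (\<lambda>\<eta>. \<Sum>j\<in>{j. j < n \<and> E i j}. w i j * (W2 \<eta> (\<mu> j t))\<^sup>2) (\<mu> i (Suc t))"
  obtains X where "\<And>t i. i < n \<Longrightarrow> quantile_fn (X t i) \<and> \<mu> i t = distr U01 borel (X t i)"
    and "\<And>t u. (\<lambda>j. X (Suc t) j u) = mix n w (\<lambda>j. X t j u)"
proof -
  have "\<forall>i. \<exists>q. i < n \<longrightarrow> quantile_fn q \<and> \<mu> i 0 = distr U01 borel q"
    using U2_quantile_fn init by blast
  from choice[OF this] obtain Q where Q: "\<And>i. i < n \<Longrightarrow> quantile_fn (Q i) \<and> \<mu> i 0 = distr U01 borel (Q i)"
    by blast
  define X where "X = rec_nat Q (\<lambda>t Xt i u. mix n w (\<lambda>j. Xt j u) i)"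
  have step: "X (Suc t) i = (\<lambda>u. \<Sum>j\<in>{j. j < n \<and> E i j}. w i j * X t j u)" if "i < n" for t i
    by (simp add: X_def mix_def sum_neighbours[OF that])
  have "quantile_fn (X t i) \<and> \<mu> i t = distr U01 borel (X t i)" if "i < n" for t i
    using that
  proof (induction t arbitrary: i)
    case 0
    thus ?case using Q by (simp add: X_def)
  next
    case (Suc t)
    have nbrs: "\<And>j. j \<in> {j. j < n \<and> E i j} \<Longrightarrow> quantile_fn (X t j) \<and> \<mu> j t = distr U01 borel (X t j)"
      using Suc.IH by blast
    have weights: "\<And>j. j \<in> {j. j < n \<and> E i j} \<Longrightarrow> 0 \<le> w i j" "(\<Sum>j\<in>{j. j < n \<and> E i j}. w i j) = 1"
      using w_nonneg Suc.prems sum_neighbours[OF Suc.prems, of "\<lambda>_. 1"] row_stoch by auto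
    have "(\<lambda>\<eta>. \<Sum>j\<in>{j. j < n \<and> E i j}. w i j * (W2 \<eta> (\<mu> j t))\<^sup>2)
          = (\<lambda>\<eta>. \<Sum>j\<in>{j. j < n \<and> E i j}. w i j * (W2 \<eta> (distr U01 borel (X t j)))\<^sup>2)"
      using nbrs by (intro ext sum.cong) auto
    hence "\<mu> i (Suc t) = distr U01 borel (X (Suc t) i)"
      unfolding step[OF Suc.prems] using update[OF Suc.prems, of t] nbrs weights
      by (intro barycenter_quantile) auto
    moreover have "quantile_fn (X (Suc t) i)"
      unfolding step[OF Suc.prems] using nbrs weights by (intro quantile_fn_convex_comb) auto
    ultimately show ?case by simp
  qed
  moreover have "(\<lambda>j. X (Suc t) j u) = mix n w (\<lambda>j. X t j u)" for t u
    by (simp add: X_def mix_def fun_eq_iff)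
  ultimately show ?thesis using that by blast
qed

lemma quantile_consensus_rate:
  assumes X: "\<And>t i. i < n \<Longrightarrow> quantile_fn (X t i)"
    and step: "\<And>t u. (\<lambda>j. X (Suc t) j u) = mix n w (\<lambda>j. X t j u)"
    and i: "i < n"
  shows "\<exists>C>0. \<exists>\<rho>. 0 < \<rho> \<and> \<rho> < 1 \<and>
           (\<forall>t. W2 (distr U01 borel (X t i)) (distr U01 borel (\<lambda>u. avg n (\<lambda>j. X 0 j u))) \<le> C * \<rho> ^ t)"
proof -
  define Xs where "Xs = (\<lambda>u. avg n (\<lambda>j. X 0 j u))"
  define V0 where "V0 = (\<lambda>u. disagreement n (\<lambda>j. X 0 j u))"
  obtain \<rho> where \<rho>: "0 < \<rho>" "\<rho> < 1" "\<And>y. disagreement n (mix n w y) \<le> \<rho> * disagreement n y"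
    using disagreement_contraction by blast
  have avg_const: "avg n (\<lambda>j. X t j u) = Xs u"
    and decay: "disagreement n (\<lambda>j. X t j u) \<le> \<rho> ^ t * V0 u" for t u
    unfolding Xs_def V0_def
    using mix_iterates[where x="\<lambda>t j. X t j u", OF col_stoch \<rho>(3)] \<rho>(1) step by auto
  have Xs: "quantile_fn Xs"
    using quantile_fn_convex_comb[of "{..<n}" "\<lambda>_. 1 / real n" "X 0"] X npos
    by (simp add: Xs_def avg_def sum_divide_distrib)
  have "V0 = (\<lambda>u. \<Sum>j<n. (X 0 j u - Xs u)^2)"
    by (simp add: V0_def disagreement_def Xs_def)
  hence "integrable U01 V0"
    using X Xs by (auto intro!: Bochner_Integration.integrable_sum quantile_fn_diff_sq_integrable)
  hence "(\<integral> u. (X t i u - Xs u)^2 \<partial>U01) \<le> \<rho> ^ t * (\<integral> u. V0 u \<partial>U01)" for t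
  proof (subst integral_mult_right_zero[symmetric], intro integral_mono)
    fix u
    have "(X t i u - Xs u)^2 \<le> disagreement n (\<lambda>j. X t j u)"
      using i unfolding disagreement_def avg_const
      by (intro member_le_sum[of i "{..<n}" "\<lambda>j. (X t j u - Xs u)^2"]) auto
    also have "\<dots> \<le> \<rho> ^ t * V0 u" by (rule decay)
    finally show "(X t i u - Xs u)^2 \<le> \<rho> ^ t * V0 u" .
  qed (use quantile_fn_diff_sq_integrable[OF X[OF i] Xs] in auto)
  moreover have "0 \<le> (\<integral> u. V0 u \<partial>U01)" by (simp add: V0_def disagreement_nonneg)
  ultimately show ?thesis
    using \<rho> W2_quantile[OF X[OF i] Xs] unfolding Xs_def[symmetric]
    by (intro geometric_rate_from_squares) (auto simp: W2_def)
qed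

end

theorem corollary2:
  fixes n :: nat
    and E :: "nat \<Rightarrow> nat \<Rightarrow> bool"
    and w :: "nat \<Rightarrow> nat \<Rightarrow> real"
    and \<mu> :: "nat \<Rightarrow> nat \<Rightarrow> real measure"
    and \<mu>star :: "real measure"
  defines "N \<equiv> (\<lambda>i. {j. j < n \<and> E i j})"
  assumes sym: "\<And>i j. i < n \<Longrightarrow> j < n \<Longrightarrow> E i j \<longleftrightarrow> E j i"
    and self_loop: "\<And>i. i < n \<Longrightarrow> E i i"
    and connected: "\<And>i j. i < n \<Longrightarrow> j < n \<Longrightarrow>
        (\<lambda>a b. a < n \<and> b < n \<and> E a b)\<^sup>*\<^sup>* i j"
    and w_pos: "\<And>i j. i < n \<Longrightarrow> j < n \<Longrightarrow> (w i j > 0 \<longleftrightarrow> E i j)"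
    and w_zero: "\<And>i j. i < n \<Longrightarrow> j < n \<Longrightarrow> \<not> E i j \<Longrightarrow> w i j = 0"
    and w_diag: "\<And>i. i < n \<Longrightarrow> w i i > 0"
    and row_stoch: "\<And>i. i < n \<Longrightarrow> (\<Sum>j<n. w i j) = 1"
    and col_stoch: "\<And>j. j < n \<Longrightarrow> (\<Sum>i<n. w i j) = 1"
    and init: "\<And>i. i < n \<Longrightarrow> \<mu> i 0 \<in> U2"
    and update: "\<And>i t. i < n \<Longrightarrow>
        is_argmin_U2 (\<lambda>\<eta>. \<Sum>j\<in>N i. w i j * (W2 \<eta> (\<mu> j t))\<^sup>2) (\<mu> i (Suc t))"
    and barycenter: "is_argmin_U2 (\<lambda>\<eta>. (1 / real n) * (\<Sum>j<n. (W2 \<eta> (\<mu> j 0))\<^sup>2)) \<mu>star"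
  shows "\<forall>i<n. \<exists>C>0. \<exists>\<rho>. 0 < \<rho> \<and> \<rho> < 1 \<and> (\<forall>t. W2 (\<mu> i t) \<mu>star \<le> C * \<rho> ^ t)"
proof (cases "n = 0")
  case False
  interpret consensus_weights n E w
    using False self_loop connected w_pos w_zero row_stoch col_stoch by unfold_locales auto
  obtain X where X: "\<And>t i. i < n \<Longrightarrow> quantile_fn (X t i) \<and> \<mu> i t = distr U01 borel (X t i)"
    and step: "\<And>t u. (\<lambda>j. X (Suc t) j u) = mix n w (\<lambda>j. X t j u)"
    using quantile_dynamics[OF init update[unfolded N_def]] by blast
  have "(\<lambda>\<eta>. (1 / real n) * (\<Sum>j<n. (W2 \<eta> (\<mu> j 0))\<^sup>2))
        = (\<lambda>\<eta>. (1 / real n) * (\<Sum>j<n. (W2 \<eta> (distr U01 borel (X 0 j)))\<^sup>2))"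
    using X by (intro ext arg_cong[where f="\<lambda>s. 1 / real n * s"] sum.cong) auto
  hence "\<mu>star = distr U01 borel (\<lambda>u. avg n (\<lambda>j. X 0 j u))"
    using barycenter X by (intro uniform_barycenter) auto
  thus ?thesis
    using quantile_consensus_rate[of X] X step by auto
qed simp

end
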